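(* For every $x\in\Gamma^\circ$ and $i\in\{0,1\}$, the map $(s,t)\mapsto\Psi_i^{(s,t)}(x)$ is a diffeomorphism from $R_i(x)$ onto its image $\Psi_i^{R_i(x)}(x)$, and from $L_i(x)$ onto its image $\Psi_i^{L_i(x)}(x)$.
   Context: Fix $\alpha>\beta>0$. For $i\in\{0,1\}$ let $\Phi_i^t(x_1,x_2)=(i+(x_1-i)e^{-\alpha t},\, i+(x_2-i)e^{-\beta t})$ ($t\in\mathbb{R}$) and $\Psi_i^t=\Phi_i^{-t}$. For $s,t>0$ set $\Psi_i^{(s,t)}=(\Phi_i^t\circ\Phi_{1-i}^s)^{-1}=\Psi_{1-i}^s\circ\Psi_i^t$. Let $\Gamma=\{(x_1,x_2): 0\le x_2\le1,\ x_2^{\alpha/\beta}\le x_1\le 1-(1-x_2)^{\alpha/\beta}\}$, $\Gamma^\circ$ its interior, $\Gamma_r=\{x\in\Gamma^\circ: x_1>x_2\}$, $\Gamma_l=\{x\in\Gamma^\circ:x_1<x_2\}$. For $x\in\Gamma^\circ$ let $T_i^2(x)=\{(s,t)\in(0,\infty)^2:\Psi_i^{(s,t)}(x)\in\Gamma^\circ\}$, $R_i(x)=\{(s,t)\in T_i^2(x):\Psi_i^t(x)\in\Gamma_r\}$ and $L_i(x)=\{(s,t)\in T_i^2(x):\Psi_i^t(x)\in\Gamma_l\}$; $\Psi_i^{A}(x)$ denotes $\{\Psi_i^{(s,t)}(x):(s,t)\in A\}$. *)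

theory Defs
  imports "HOL-Analysis.Analysis"
begin

definition Phi :: "real \<Rightarrow> real \<Rightarrow> real \<Rightarrow> real \<Rightarrow> real \<times> real \<Rightarrow> real \<times> real" where
  "Phi al be i t x = (i + (fst x - i) * exp (- al * t), i + (snd x - i) * exp (- be * t))"

definition Psi :: "real \<Rightarrow> real \<Rightarrow> real \<Rightarrow> real \<Rightarrow> real \<times> real \<Rightarrow> real \<times> real" where
  "Psi al be i t = Phi al be i (- t)"

definition Psi2 :: "real \<Rightarrow> real \<Rightarrow> real \<Rightarrow> real \<times> real \<Rightarrow> real \<times> real \<Rightarrow> real \<times> real" where
  "Psi2 al be i st = Psi al be (1 - i) (fst st) \<circ> Psi al be i (snd st)"

definition Gamma :: "real \<Rightarrow> real \<Rightarrow> (real \<times> real) set" where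
  "Gamma al be = {(x1, x2). 0 \<le> x2 \<and> x2 \<le> 1 \<and> x2 powr (al / be) \<le> x1
                    \<and> x1 \<le> 1 - (1 - x2) powr (al / be)}"

definition Gamma_r :: "real \<Rightarrow> real \<Rightarrow> (real \<times> real) set" where
  "Gamma_r al be = {x \<in> interior (Gamma al be). fst x > snd x}"

definition Gamma_l :: "real \<Rightarrow> real \<Rightarrow> (real \<times> real) set" where
  "Gamma_l al be = {x \<in> interior (Gamma al be). fst x < snd x}"

definition T2 :: "real \<Rightarrow> real \<Rightarrow> real \<Rightarrow> real \<times> real \<Rightarrow> (real \<times> real) set" where
  "T2 al be i x = {st. 0 < fst st \<and> 0 < snd st \<and> Psi2 al be i st x \<in> interior (Gamma al be)}"

definition Rset :: "real \<Rightarrow> real \<Rightarrow> real \<Rightarrow> real \<times> real \<Rightarrow> (real \<times> real) set" where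
  "Rset al be i x = {st \<in> T2 al be i x. Psi al be i (snd st) x \<in> Gamma_r al be}"

definition Lset :: "real \<Rightarrow> real \<Rightarrow> real \<Rightarrow> real \<times> real \<Rightarrow> (real \<times> real) set" where
  "Lset al be i x = {st \<in> T2 al be i x. Psi al be i (snd st) x \<in> Gamma_l al be}"

fun Ck_on :: "nat \<Rightarrow> (real \<times> real) set \<Rightarrow> (real \<times> real \<Rightarrow> real \<times> real) \<Rightarrow> bool" where
  "Ck_on 0 A f = continuous_on A f"
| "Ck_on (Suc k) A f =
     (\<exists>D1 D2. (\<forall>z\<in>A. (f has_derivative (\<lambda>h. fst h *\<^sub>R D1 z + snd h *\<^sub>R D2 z)) (at z))
              \<and> Ck_on k A D1 \<and> Ck_on k A D2)"

definition smooth_on :: "(real \<times> real) set \<Rightarrow> (real \<times> real \<Rightarrow> real \<times> real) \<Rightarrow> bool" where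
  "smooth_on A f = (\<forall>k. Ck_on k A f)"

definition diffeo_onto :: "(real \<times> real \<Rightarrow> real \<times> real) \<Rightarrow> (real \<times> real) set \<Rightarrow> (real \<times> real) set \<Rightarrow> bool" where
  "diffeo_onto f A B = (open A \<and> open B \<and> bij_betw f A B \<and> smooth_on A f \<and> smooth_on B (inv_into A f))"

end

theory Submission
  imports Defs
begin

text \<open>
  Write F(s, t) = \<Psi>_i^(s,t)(x) and Y(t) = \<Psi>_i^t(x). F is an exponential polynomial in
  (s, t) whose Jacobian determinant is a nonzero multiple of (1 - 2i) (Y_1 - Y_2); on R_i(x)
  and L_i(x) the point Y stays off the diagonal, so F is a local diffeomorphism there.

  For injectivity write Y(t) = (p e^(\<alpha>t), q e^(\<beta>t)) (for i = 0; the case i = 1 is its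
  reflection z \<mapsto> 1 - z). Taking logarithms of both coordinates of F(s, t) = F(s', t')
  and eliminating s gives H(t) = H(t') for
  H(\<tau>) = \<beta> ln(1 - p e^(\<alpha>\<tau>)) - \<alpha> ln(1 - q e^(\<beta>\<tau>)),
  whose derivative has the sign of q e^(\<beta>\<tau>) - p e^(\<alpha>\<tau>). Since \<alpha> > \<beta>, the ratio
  p e^(\<alpha>\<tau>) / q e^(\<beta>\<tau>) increases, so a sign shared by t and t' persists in between
  and the mean value theorem forces t = t', hence s = s'.

  An injective local diffeomorphism of an open set of the plane has open image by
  invariance of domain. By the inverse function theorem the partial derivatives of the
  inverse are smooth functions (Cramer's rule) of the inverse itself, which bootstraps
  to C^k for every k.
\<close>

fun Ck_real_on :: "nat \<Rightarrow> (real \<times> real) set \<Rightarrow> (real \<times> real \<Rightarrow> real) \<Rightarrow> bool" where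
  "Ck_real_on 0 A p = continuous_on A p"
| "Ck_real_on (Suc k) A p =
     (\<exists>px py. (\<forall>z\<in>A. (p has_derivative (\<lambda>h. fst h * px z + snd h * py z)) (at z))
              \<and> Ck_real_on k A px \<and> Ck_real_on k A py)"

declare Ck_real_on.simps(2) [simp del]

lemma Ck_real_on_SucI:
  assumes "\<And>z. z \<in> A \<Longrightarrow> (p has_derivative (\<lambda>h. fst h * px z + snd h * py z)) (at z)"
    and "Ck_real_on k A px" and "Ck_real_on k A py"
  shows "Ck_real_on (Suc k) A p"
  using assms unfolding Ck_real_on.simps by blast

lemma Ck_real_on_SucE:
  assumes "Ck_real_on (Suc k) A p"
  obtains px py where "\<And>z. z \<in> A \<Longrightarrow> (p has_derivative (\<lambda>h. fst h * px z + snd h * py z)) (at z)"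
    and "Ck_real_on k A px" and "Ck_real_on k A py"
  using assms unfolding Ck_real_on.simps by blast

lemma Ck_real_on_imp_continuous_on: "continuous_on A p" if "Ck_real_on k A p"
proof (cases k)
  case (Suc j)
  with that have "Ck_real_on (Suc j) A p" by simp
  then obtain px py
    where "\<And>z. z \<in> A \<Longrightarrow> (p has_derivative (\<lambda>h. fst h * px z + snd h * py z)) (at z)"
    by (rule Ck_real_on_SucE) blast
  then show ?thesis
    by (blast intro: continuous_at_imp_continuous_on has_derivative_continuous)
qed (use that in simp)

lemma Ck_real_on_SucD: "Ck_real_on (Suc k) A p \<Longrightarrow> Ck_real_on k A p"
proof (induction k arbitrary: p)
  case 0
  then show ?case using Ck_real_on_imp_continuous_on by simp
next
  case (Suc k)
  from Suc.prems obtain px py where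
    "\<And>z. z \<in> A \<Longrightarrow> (p has_derivative (\<lambda>h. fst h * px z + snd h * py z)) (at z)"
    "Ck_real_on (Suc k) A px" "Ck_real_on (Suc k) A py" by (rule Ck_real_on_SucE) blast
  then show ?case by (blast intro: Ck_real_on_SucI Suc.IH)
qed

lemma Ck_real_on_const: "Ck_real_on k A (\<lambda>z. c)"
proof (induction k arbitrary: c)
  case (Suc k)
  show ?case
    by (rule Ck_real_on_SucI[where px = "\<lambda>z. 0" and py = "\<lambda>z. 0"])
      (auto intro!: derivative_eq_intros Suc)
qed simp

lemma Ck_real_on_if_partials:
  assumes "\<And>z. z \<in> A \<Longrightarrow> (p has_derivative (\<lambda>h. fst h * px z + snd h * py z)) (at z)"
    and "\<And>k. Ck_real_on k A px" and "\<And>k. Ck_real_on k A py"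
  shows "Ck_real_on k A p"
proof -
  have "Ck_real_on (Suc k) A p" using assms by (rule Ck_real_on_SucI)
  then show ?thesis by (rule Ck_real_on_SucD)
qed

lemma Ck_real_on_fst: "Ck_real_on k A fst"
  by (rule Ck_real_on_if_partials[where px = "\<lambda>z. 1" and py = "\<lambda>z. 0"])
    (auto intro!: derivative_eq_intros Ck_real_on_const)

lemma Ck_real_on_snd: "Ck_real_on k A snd"
  by (rule Ck_real_on_if_partials[where px = "\<lambda>z. 0" and py = "\<lambda>z. 1"])
    (auto intro!: derivative_eq_intros Ck_real_on_const)

lemma Ck_real_on_add: "Ck_real_on k A p \<Longrightarrow> Ck_real_on k A q \<Longrightarrow> Ck_real_on k A (\<lambda>z. p z + q z)"
proof (induction k arbitrary: p q)
  case (Suc k)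
  from Suc.prems(1) obtain px py where
    "\<And>z. z \<in> A \<Longrightarrow> (p has_derivative (\<lambda>h. fst h * px z + snd h * py z)) (at z)"
    "Ck_real_on k A px" "Ck_real_on k A py" by (rule Ck_real_on_SucE) blast
  moreover from Suc.prems(2) obtain qx qy where
    "\<And>z. z \<in> A \<Longrightarrow> (q has_derivative (\<lambda>h. fst h * qx z + snd h * qy z)) (at z)"
    "Ck_real_on k A qx" "Ck_real_on k A qy" by (rule Ck_real_on_SucE) blast
  ultimately show ?case
    by (intro Ck_real_on_SucI[where px = "\<lambda>z. px z + qx z" and py = "\<lambda>z. py z + qy z"] Suc.IH)
      (auto intro!: derivative_eq_intros simp: algebra_simps)
qed (simp add: continuous_on_add)

lemma Ck_real_on_minus: "Ck_real_on k A p \<Longrightarrow> Ck_real_on k A (\<lambda>z. - p z)"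
proof (induction k arbitrary: p)
  case (Suc k)
  from Suc.prems obtain px py where
    "\<And>z. z \<in> A \<Longrightarrow> (p has_derivative (\<lambda>h. fst h * px z + snd h * py z)) (at z)"
    "Ck_real_on k A px" "Ck_real_on k A py" by (rule Ck_real_on_SucE) blast
  then show ?case
    by (intro Ck_real_on_SucI[where px = "\<lambda>z. - px z" and py = "\<lambda>z. - py z"] Suc.IH)
      (auto intro!: derivative_eq_intros)
qed (simp add: continuous_on_minus)

lemma Ck_real_on_diff: "Ck_real_on k A p \<Longrightarrow> Ck_real_on k A q \<Longrightarrow> Ck_real_on k A (\<lambda>z. p z - q z)"
  using Ck_real_on_add[OF _ Ck_real_on_minus, of k A p q] by simp

lemma Ck_real_on_mult: "Ck_real_on k A p \<Longrightarrow> Ck_real_on k A q \<Longrightarrow> Ck_real_on k A (\<lambda>z. p z * q z)"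
proof (induction k arbitrary: p q)
  case (Suc k)
  from Suc.prems(1) obtain px py where
    "\<And>z. z \<in> A \<Longrightarrow> (p has_derivative (\<lambda>h. fst h * px z + snd h * py z)) (at z)"
    "Ck_real_on k A px" "Ck_real_on k A py" by (rule Ck_real_on_SucE) blast
  moreover from Suc.prems(2) obtain qx qy where
    "\<And>z. z \<in> A \<Longrightarrow> (q has_derivative (\<lambda>h. fst h * qx z + snd h * qy z)) (at z)"
    "Ck_real_on k A qx" "Ck_real_on k A qy" by (rule Ck_real_on_SucE) blast
  moreover have "Ck_real_on k A p" "Ck_real_on k A q"
    using Suc.prems by (simp_all add: Ck_real_on_SucD)
  ultimately show ?case
    by (intro Ck_real_on_SucI[where px = "\<lambda>z. px z * q z + p z * qx z"
          and py = "\<lambda>z. py z * q z + p z * qy z"] Suc.IH Ck_real_on_add)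
      (auto intro!: derivative_eq_intros simp: algebra_simps)
qed (simp add: continuous_on_mult)

lemma Ck_real_on_exp: "Ck_real_on k A p \<Longrightarrow> Ck_real_on k A (\<lambda>z. exp (p z))"
proof (induction k arbitrary: p)
  case (Suc k)
  from Suc.prems obtain px py where
    "\<And>z. z \<in> A \<Longrightarrow> (p has_derivative (\<lambda>h. fst h * px z + snd h * py z)) (at z)"
    "Ck_real_on k A px" "Ck_real_on k A py" by (rule Ck_real_on_SucE) blast
  moreover have "Ck_real_on k A p" using Suc.prems by (rule Ck_real_on_SucD)
  ultimately show ?case
    by (intro Ck_real_on_SucI[where px = "\<lambda>z. exp (p z) * px z" and py = "\<lambda>z. exp (p z) * py z"]
        Suc.IH Ck_real_on_mult)
      (auto intro!: derivative_eq_intros simp: algebra_simps)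
qed (simp add: continuous_on_exp)

lemma Ck_real_on_inverse:
  "Ck_real_on k A p \<Longrightarrow> (\<And>z. z \<in> A \<Longrightarrow> p z \<noteq> 0) \<Longrightarrow> Ck_real_on k A (\<lambda>z. inverse (p z))"
proof (induction k arbitrary: p)
  case (Suc k)
  from Suc.prems(1) obtain px py where dp:
    "\<And>z. z \<in> A \<Longrightarrow> (p has_derivative (\<lambda>h. fst h * px z + snd h * py z)) (at z)"
    "Ck_real_on k A px" "Ck_real_on k A py" by (rule Ck_real_on_SucE) blast
  define q where "q z = - (inverse (p z) * inverse (p z))" for z
  have "Ck_real_on k A (\<lambda>z. inverse (p z))"
    using Ck_real_on_SucD[OF Suc.prems(1)] Suc.prems(2) by (rule Suc.IH)
  then have "Ck_real_on k A q"
    unfolding q_def by (intro Ck_real_on_minus Ck_real_on_mult)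
  moreover have "((\<lambda>z. inverse (p z)) has_derivative
      (\<lambda>h. fst h * (q z * px z) + snd h * (q z * py z))) (at z)" if "z \<in> A" for z
    using dp(1)[OF that] Suc.prems(2)[OF that] unfolding q_def
    by (auto intro!: derivative_eq_intros simp: algebra_simps)
  ultimately show ?case
    using dp(2,3) by (intro Ck_real_on_SucI[where px = "\<lambda>z. q z * px z" and py = "\<lambda>z. q z * py z"]
        Ck_real_on_mult)
qed (simp add: continuous_on_inverse)

lemma Ck_real_on_divide:
  "Ck_real_on k A p \<Longrightarrow> Ck_real_on k A q \<Longrightarrow> (\<And>z. z \<in> A \<Longrightarrow> q z \<noteq> 0)
    \<Longrightarrow> Ck_real_on k A (\<lambda>z. p z / q z)"
  unfolding divide_inverse by (intro Ck_real_on_mult Ck_real_on_inverse)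

lemma Ck_real_on_compose:
  assumes "Ck_real_on k A \<phi>"
    and "Ck_real_on k B (\<lambda>w. fst (g w))" and "Ck_real_on k B (\<lambda>w. snd (g w))"
    and "g ` B \<subseteq> A"
  shows "Ck_real_on k B (\<lambda>w. \<phi> (g w))"
  using assms
proof (induction k arbitrary: \<phi> g)
  case 0
  then have "continuous_on B g"
    using continuous_on_Pair[of B "\<lambda>w. fst (g w)" "\<lambda>w. snd (g w)"] by simp
  with 0 show ?case by (auto intro: continuous_on_compose2)
next
  case (Suc k)
  from Suc.prems(1) obtain \<phi>x \<phi>y where d\<phi>:
    "\<And>z. z \<in> A \<Longrightarrow> (\<phi> has_derivative (\<lambda>h. fst h * \<phi>x z + snd h * \<phi>y z)) (at z)"
    "Ck_real_on k A \<phi>x" "Ck_real_on k A \<phi>y" by (rule Ck_real_on_SucE) blast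
  from Suc.prems(2) obtain g1x g1y where dg1:
    "\<And>w. w \<in> B \<Longrightarrow> ((\<lambda>w. fst (g w)) has_derivative (\<lambda>h. fst h * g1x w + snd h * g1y w)) (at w)"
    "Ck_real_on k B g1x" "Ck_real_on k B g1y" by (rule Ck_real_on_SucE) blast
  from Suc.prems(3) obtain g2x g2y where dg2:
    "\<And>w. w \<in> B \<Longrightarrow> ((\<lambda>w. snd (g w)) has_derivative (\<lambda>h. fst h * g2x w + snd h * g2y w)) (at w)"
    "Ck_real_on k B g2x" "Ck_real_on k B g2y" by (rule Ck_real_on_SucE) blast
  have g: "Ck_real_on k B (\<lambda>w. fst (g w))" "Ck_real_on k B (\<lambda>w. snd (g w))"
    using Suc.prems(2,3) by (simp_all add: Ck_real_on_SucD)
  have chain: "((\<lambda>w. \<phi> (g w)) has_derivative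
      (\<lambda>h. fst h * (g1x w * \<phi>x (g w) + g2x w * \<phi>y (g w))
          + snd h * (g1y w * \<phi>x (g w) + g2y w * \<phi>y (g w)))) (at w)" if w: "w \<in> B" for w
  proof -
    have "(g has_derivative
        (\<lambda>h. (fst h * g1x w + snd h * g1y w, fst h * g2x w + snd h * g2y w))) (at w)"
      using has_derivative_Pair[OF dg1(1)[OF w] dg2(1)[OF w]] by simp
    moreover have "g w \<in> A" using w Suc.prems(4) by blast
    ultimately show ?thesis
      by (rule has_derivative_eq_rhs[OF has_derivative_compose[OF _ d\<phi>(1)]])
        (simp add: fun_eq_iff algebra_simps)
  qed
  have "Ck_real_on k B (\<lambda>w. \<phi>x (g w))" using d\<phi>(2) g Suc.prems(4) by (rule Suc.IH)
  moreover have "Ck_real_on k B (\<lambda>w. \<phi>y (g w))" using d\<phi>(3) g Suc.prems(4) by (rule Suc.IH)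
  ultimately
  show ?case using dg1(2,3) dg2(2,3)
    by (intro Ck_real_on_SucI[OF chain] Ck_real_on_add Ck_real_on_mult)
qed

lemma Ck_on_if_components:
  "Ck_real_on k A (\<lambda>z. fst (f z)) \<Longrightarrow> Ck_real_on k A (\<lambda>z. snd (f z)) \<Longrightarrow> Ck_on k A f"
proof (induction k arbitrary: f)
  case 0
  then show ?case using continuous_on_Pair[of A "\<lambda>z. fst (f z)" "\<lambda>z. snd (f z)"] by simp
next
  case (Suc k)
  from Suc.prems(1) obtain px py where dp:
    "\<And>z. z \<in> A \<Longrightarrow> ((\<lambda>z. fst (f z)) has_derivative (\<lambda>h. fst h * px z + snd h * py z)) (at z)"
    "Ck_real_on k A px" "Ck_real_on k A py" by (rule Ck_real_on_SucE) blast
  from Suc.prems(2) obtain qx qy where dq: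
    "\<And>z. z \<in> A \<Longrightarrow> ((\<lambda>z. snd (f z)) has_derivative (\<lambda>h. fst h * qx z + snd h * qy z)) (at z)"
    "Ck_real_on k A qx" "Ck_real_on k A qy" by (rule Ck_real_on_SucE) blast
  show ?case
    unfolding Ck_on.simps
  proof (intro exI conjI ballI)
    fix z assume "z \<in> A"
    have "(\<lambda>h. fst h *\<^sub>R (px z, qx z) + snd h *\<^sub>R (py z, qy z))
        = (\<lambda>h. (fst h * px z + snd h * py z, fst h * qx z + snd h * qy z))"
      by (simp add: fun_eq_iff)
    then show "(f has_derivative (\<lambda>h. fst h *\<^sub>R (px z, qx z) + snd h *\<^sub>R (py z, qy z))) (at z)"
      using has_derivative_Pair[OF dp(1) dq(1), OF \<open>z \<in> A\<close> \<open>z \<in> A\<close>] by simp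
  next
    show "Ck_on k A (\<lambda>z. (px z, qx z))" "Ck_on k A (\<lambda>z. (py z, qy z))"
      using dp(2,3) dq(2,3) by (simp_all only: Suc.IH fst_conv snd_conv)
  qed
qed

lemma has_derivative_inv_into_Cramer:
  fixes f :: "real \<times> real \<Rightarrow> real \<times> real"
  assumes "open A" and "inj_on f A" and "continuous_on A f" and "w \<in> f ` A"
    and "(f has_derivative (\<lambda>h. (fst h * a + snd h * b, fst h * c + snd h * d)))
      (at (inv_into A f w))"
    and det: "a * d - b * c \<noteq> 0"
  shows "((\<lambda>w. fst (inv_into A f w)) has_derivative
      (\<lambda>h. fst h * (d / (a * d - b * c)) + snd h * (- b / (a * d - b * c)))) (at w)"
    and "((\<lambda>w. snd (inv_into A f w)) has_derivative
      (\<lambda>h. fst h * (- c / (a * d - b * c)) + snd h * (a / (a * d - b * c)))) (at w)"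
proof -
  define \<Delta> where "\<Delta> = a * d - b * c"
  define g' where
    "g' h = (fst h * (d / \<Delta>) + snd h * (- b / \<Delta>), fst h * (- c / \<Delta>) + snd h * (a / \<Delta>))"
    for h :: "real \<times> real"
  from \<open>w \<in> f ` A\<close> obtain z where z: "z \<in> A" "w = f z" by blast
  have "(x * (d / \<Delta>) + y * (- b / \<Delta>)) * a + (x * (- c / \<Delta>) + y * (a / \<Delta>)) * b = x"
    "(x * (d / \<Delta>) + y * (- b / \<Delta>)) * c + (x * (- c / \<Delta>) + y * (a / \<Delta>)) * d = y" for x y
    using det unfolding \<Delta>_def[symmetric]
    by (simp_all add: field_simps) (simp_all add: \<Delta>_def algebra_simps)
  then have lin: "(\<lambda>h. (fst h * a + snd h * b, fst h * c + snd h * d)) \<circ> g' = id"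
    by (simp add: fun_eq_iff g'_def)
  have inv: "inv_into A f (f x) = x" if "x \<in> A" for x
    using assms(2) that by (rule inv_into_f_f)
  have "(f has_derivative (\<lambda>h. (fst h * a + snd h * b, fst h * c + snd h * d))) (at z)"
    using assms(5) inv[OF z(1)] unfolding z(2) by simp
  from has_derivative_inverse_strong[OF assms(1) z(1) assms(3) inv this lin]
  have "(inv_into A f has_derivative g') (at w)" unfolding z(2) .
  from has_derivative_fst[OF this] has_derivative_snd[OF this]
  show "((\<lambda>w. fst (inv_into A f w)) has_derivative
      (\<lambda>h. fst h * (d / (a * d - b * c)) + snd h * (- b / (a * d - b * c)))) (at w)"
    "((\<lambda>w. snd (inv_into A f w)) has_derivative
      (\<lambda>h. fst h * (- c / (a * d - b * c)) + snd h * (a / (a * d - b * c)))) (at w)"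
    by (simp_all add: g'_def \<Delta>_def)
qed

lemma Ck_real_on_components_bootstrap:
  assumes "g ` B \<subseteq> A"
    and "\<And>w. w \<in> B \<Longrightarrow>
      ((\<lambda>w. fst (g w)) has_derivative (\<lambda>h. fst h * \<phi>1 (g w) + snd h * \<phi>2 (g w))) (at w)"
    and "\<And>w. w \<in> B \<Longrightarrow>
      ((\<lambda>w. snd (g w)) has_derivative (\<lambda>h. fst h * \<phi>3 (g w) + snd h * \<phi>4 (g w))) (at w)"
    and "\<And>k. Ck_real_on k A \<phi>1" "\<And>k. Ck_real_on k A \<phi>2"
    and "\<And>k. Ck_real_on k A \<phi>3" "\<And>k. Ck_real_on k A \<phi>4"
  shows "Ck_real_on k B (\<lambda>w. fst (g w)) \<and> Ck_real_on k B (\<lambda>w. snd (g w))"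
proof (induction k)
  case 0
  have "isCont (\<lambda>w. fst (g w)) w" "isCont (\<lambda>w. snd (g w)) w" if "w \<in> B" for w
    using assms(2,3)[OF that] by (auto intro: has_derivative_continuous)
  then show ?case by (simp add: continuous_at_imp_continuous_on)
next
  case (Suc k)
  have comp: "Ck_real_on k B (\<lambda>w. \<phi> (g w))" if "\<And>k. Ck_real_on k A \<phi>" for \<phi>
    using that Suc.IH assms(1) by (blast intro: Ck_real_on_compose)
  show ?case
  proof
    show "Ck_real_on (Suc k) B (\<lambda>w. fst (g w))"
      using assms(2) comp[OF assms(4)] comp[OF assms(5)] by (rule Ck_real_on_SucI)
    show "Ck_real_on (Suc k) B (\<lambda>w. snd (g w))"
      using assms(3) comp[OF assms(6)] comp[OF assms(7)] by (rule Ck_real_on_SucI)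
  qed
qed

lemma diffeo_onto_if_Jacobian_nonzero:
  fixes f :: "real \<times> real \<Rightarrow> real \<times> real"
  assumes A: "open A" and inj: "inj_on f A"
    and der: "\<And>z. z \<in> A \<Longrightarrow>
      (f has_derivative (\<lambda>h. (fst h * a z + snd h * b z, fst h * c z + snd h * d z))) (at z)"
    and a: "\<And>k. Ck_real_on k A a" and b: "\<And>k. Ck_real_on k A b"
    and c: "\<And>k. Ck_real_on k A c" and d: "\<And>k. Ck_real_on k A d"
    and det: "\<And>z. z \<in> A \<Longrightarrow> a z * d z - b z * c z \<noteq> 0"
  shows "diffeo_onto f A (f ` A)"
proof -
  define g where "g = inv_into A f"
  define \<Delta> where "\<Delta> z = a z * d z - b z * c z" for z
  have contf: "continuous_on A f"
    using der by (blast intro: continuous_at_imp_continuous_on has_derivative_continuous)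
  have "Ck_on k A f" for k
  proof -
    have "((\<lambda>z. fst (f z)) has_derivative (\<lambda>h. fst h * a z + snd h * b z)) (at z)"
      "((\<lambda>z. snd (f z)) has_derivative (\<lambda>h. fst h * c z + snd h * d z)) (at z)" if "z \<in> A" for z
      using has_derivative_fst[OF der[OF that]] has_derivative_snd[OF der[OF that]] by simp_all
    then have "Ck_real_on k A (\<lambda>z. fst (f z))" "Ck_real_on k A (\<lambda>z. snd (f z))"
      using a b c d by (blast intro: Ck_real_on_if_partials)+
    then show "Ck_on k A f" by (rule Ck_on_if_components)
  qed
  moreover have "Ck_on k (f ` A) g" for k
  proof -
    have "Ck_real_on k A \<Delta>" for k
      unfolding \<Delta>_def by (intro Ck_real_on_diff Ck_real_on_mult a b c d)
    moreover have "\<Delta> z \<noteq> 0" if "z \<in> A" for z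
      using det[OF that] by (simp add: \<Delta>_def)
    ultimately have quot: "Ck_real_on k A (\<lambda>z. p z / \<Delta> z)" if "\<And>k. Ck_real_on k A p" for p k
      using that by (blast intro: Ck_real_on_divide)
    have gA: "g ` f ` A \<subseteq> A" unfolding g_def by (auto simp: inv_into_into)
    have "((\<lambda>w. fst (g w)) has_derivative
        (\<lambda>h. fst h * (d (g w) / \<Delta> (g w)) + snd h * (- b (g w) / \<Delta> (g w)))) (at w)"
      "((\<lambda>w. snd (g w)) has_derivative
        (\<lambda>h. fst h * (- c (g w) / \<Delta> (g w)) + snd h * (a (g w) / \<Delta> (g w)))) (at w)"
      if "w \<in> f ` A" for w
      using has_derivative_inv_into_Cramer[OF A inj contf that der det,
          OF inv_into_into inv_into_into, OF that that]
      unfolding g_def \<Delta>_def by simp_all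
    then have "Ck_real_on k (f ` A) (\<lambda>w. fst (g w)) \<and> Ck_real_on k (f ` A) (\<lambda>w. snd (g w))"
      using gA quot[OF d] quot[OF Ck_real_on_minus[OF b]] quot[OF Ck_real_on_minus[OF c]] quot[OF a]
      by (intro Ck_real_on_components_bootstrap) blast+
    then show ?thesis by (blast intro: Ck_on_if_components)
  qed
  moreover have "open (f ` A)" using contf A inj by (rule invariance_of_domain)
  ultimately show ?thesis
    using A inj unfolding diffeo_onto_def smooth_on_def g_def by (simp add: inj_on_imp_bij_betw)
qed

lemma exp_dominance_persists:
  fixes p q :: real
  assumes "be < al" and "0 < q" and "t \<le> \<tau>" and "q * exp (be * t) < p * exp (al * t)"
  shows "q * exp (be * \<tau>) < p * exp (al * \<tau>)"
proof -
  have "q * exp (be * \<tau>) = q * exp (be * t) * exp (be * (\<tau> - t))"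
    by (simp add: algebra_simps flip: exp_add)
  also have "\<dots> \<le> q * exp (be * t) * exp (al * (\<tau> - t))"
    using assms by (intro mult_left_mono) (auto intro: mult_right_mono)
  also have "\<dots> < p * exp (al * t) * exp (al * (\<tau> - t))"
    using assms(4) by simp
  also have "\<dots> = p * exp (al * \<tau>)"
    by (simp add: algebra_simps flip: exp_add)
  finally show ?thesis .
qed

lemma has_real_derivative_ln_combination:
  fixes p q :: real
  assumes "p * exp (al * \<tau>) < 1" and "q * exp (be * \<tau>) < 1"
  shows "((\<lambda>\<tau>. be * ln (1 - p * exp (al * \<tau>)) - al * ln (1 - q * exp (be * \<tau>))) has_real_derivative
    al * be * (q * exp (be * \<tau>) - p * exp (al * \<tau>))
      / ((1 - p * exp (al * \<tau>)) * (1 - q * exp (be * \<tau>)))) (at \<tau>)"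
  using assms by (auto intro!: derivative_eq_intros) (simp_all add: field_simps)

lemma ln_combination_neq:
  fixes p q :: real
  assumes "0 < be" and "be < al" and "0 < p" and "0 < q" and "t < t'"
    and "p * exp (al * t') < 1" and "q * exp (be * t') < 1"
    and gap: "q * exp (be * t) < p * exp (al * t) \<or> p * exp (al * t') < q * exp (be * t')"
  shows "be * ln (1 - p * exp (al * t)) - al * ln (1 - q * exp (be * t)) \<noteq>
    be * ln (1 - p * exp (al * t')) - al * ln (1 - q * exp (be * t'))"
proof
  define H where "H \<tau> = be * ln (1 - p * exp (al * \<tau>)) - al * ln (1 - q * exp (be * \<tau>))" for \<tau>
  assume "H t = H t'"
  have bounds: "p * exp (al * \<tau>) < 1" "q * exp (be * \<tau>) < 1" if "\<tau> \<le> t'" for \<tau>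
    using assms that by (smt (verit) exp_le_cancel_iff mult_left_mono mult_right_mono)+
  define H' where "H' \<tau> = al * be * (q * exp (be * \<tau>) - p * exp (al * \<tau>))
    / ((1 - p * exp (al * \<tau>)) * (1 - q * exp (be * \<tau>)))" for \<tau>
  have "\<exists>\<xi>>t. \<xi> < t' \<and> H t' - H t = (t' - t) * H' \<xi>"
    using bounds unfolding H_def H'_def
    by (intro MVT2[OF \<open>t < t'\<close>] has_real_derivative_ln_combination) simp_all
  with \<open>H t = H t'\<close> obtain \<xi> where \<xi>: "t < \<xi>" "\<xi> < t'" and "H' \<xi> = 0"
    by auto
  with bounds[of \<xi>] assms(1,2) have "q * exp (be * \<xi>) = p * exp (al * \<xi>)"
    by (simp add: H'_def)
  moreover have "q * exp (be * \<xi>) \<noteq> p * exp (al * \<xi>)"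
    using gap
  proof
    assume "q * exp (be * t) < p * exp (al * t)"
    from exp_dominance_persists[OF \<open>be < al\<close> \<open>0 < q\<close> less_imp_le[OF \<open>t < \<xi>\<close>] this]
    show ?thesis by simp
  next
    assume "p * exp (al * t') < q * exp (be * t')"
    then show ?thesis
      using exp_dominance_persists[where be = "- al" and al = "- be" and q = p and p = q
          and t = "- t'" and \<tau> = "- \<xi>"] assms(2,3) \<xi> by simp
  qed
  ultimately show False by contradiction
qed

lemma scaled_flows_eq_imp_eq:
  fixes p q :: real
  assumes "0 < be" and "be < al" and "0 < p" and "0 < q"
    and bounds: "p * exp (al * t) < 1" "q * exp (be * t) < 1"
      "p * exp (al * t') < 1" "q * exp (be * t') < 1"
    and side: "(q * exp (be * t) < p * exp (al * t) \<and> q * exp (be * t') < p * exp (al * t'))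
      \<or> (p * exp (al * t) < q * exp (be * t) \<and> p * exp (al * t') < q * exp (be * t'))"
    and eq1: "(1 - p * exp (al * t)) * exp (al * s) = (1 - p * exp (al * t')) * exp (al * s')"
    and eq2: "(1 - q * exp (be * t)) * exp (be * s) = (1 - q * exp (be * t')) * exp (be * s')"
  shows "s = s' \<and> t = t'"
proof -
  have ln1: "ln (1 - p * exp (al * t)) + al * s = ln (1 - p * exp (al * t')) + al * s'"
    using arg_cong[OF eq1, of ln] bounds by (simp add: ln_mult)
  have ln2: "ln (1 - q * exp (be * t)) + be * s = ln (1 - q * exp (be * t')) + be * s'"
    using arg_cong[OF eq2, of ln] bounds by (simp add: ln_mult)
  have "be * ln (1 - p * exp (al * t)) - al * ln (1 - q * exp (be * t)) =
      be * ln (1 - p * exp (al * t')) - al * ln (1 - q * exp (be * t'))"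
    using arg_cong[OF ln1, of "(*) be"] arg_cong[OF ln2, of "(*) al"] by (simp add: algebra_simps)
  then have "t = t'"
    using ln_combination_neq[OF assms(1-4), of t t'] ln_combination_neq[OF assms(1-4), of t' t]
      bounds side by (metis linorder_neqE)
  with ln1 \<open>be < al\<close> \<open>0 < be\<close> show ?thesis by simp
qed

lemma Psi_eq: "Psi al be i t x = (i + (fst x - i) * exp (al * t), i + (snd x - i) * exp (be * t))"
  by (simp add: Psi_def Phi_def)

lemma Psi2_eq:
  "Psi2 al be i st x =
    (1 - i + (fst (Psi al be i (snd st) x) - (1 - i)) * exp (al * fst st),
     1 - i + (snd (Psi al be i (snd st) x) - (1 - i)) * exp (be * fst st))"
  by (simp add: Psi2_def Psi_def Phi_def)

lemma interior_Gamma_subset: "interior (Gamma al be) \<subseteq> {0<..<1} \<times> {0<..<1}"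
proof -
  have "(x1, x2) \<in> {0..1} \<times> {0..1}" if "(x1, x2) \<in> Gamma al be" for x1 x2
  proof -
    from that have "0 \<le> x2" "x2 \<le> 1" "x2 powr (al / be) \<le> x1" "x1 \<le> 1 - (1 - x2) powr (al / be)"
      by (simp_all add: Gamma_def)
    moreover note powr_ge_zero[of x2 "al / be"] powr_ge_zero[of "1 - x2" "al / be"]
    ultimately have "0 \<le> x1 \<and> x1 \<le> 1 \<and> 0 \<le> x2 \<and> x2 \<le> 1" by linarith
    then show ?thesis by simp
  qed
  then have "Gamma al be \<subseteq> {0..1} \<times> {0..1}" by auto
  then have "interior (Gamma al be) \<subseteq> interior ({0..1} \<times> {0..1})" by (rule interior_mono)
  then show ?thesis by (simp add: interior_Times)
qed

lemma Psi2_inj_on: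
  assumes "0 < be" and "be < al" and x: "x \<in> interior (Gamma al be)" and i: "i \<in> {0, 1}"
    and S: "S \<subseteq> interior (Gamma al be)"
    and side: "S \<subseteq> {z. snd z < fst z} \<or> S \<subseteq> {z. fst z < snd z}"
  shows "inj_on (\<lambda>st. Psi2 al be i st x) {st. Psi al be i (snd st) x \<in> S}"
proof (rule inj_onI, clarsimp)
  fix s t s' t'
  assume Y: "Psi al be i t x \<in> S" "Psi al be i t' x \<in> S"
    and eq: "Psi2 al be i (s, t) x = Psi2 al be i (s', t') x"
  \<comment> \<open>With \<open>\<sigma> = \<plusminus>1\<close> both cases \<open>i = 0, 1\<close> take the form of \<open>scaled_flows_eq_imp_eq\<close>.\<close>
  define \<sigma> where "\<sigma> = 1 - 2 * i"
  define p where "p = \<sigma> * (fst x - i)"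
  define q where "q = \<sigma> * (snd x - i)"
  have \<sigma>: "\<sigma> = 1 \<or> \<sigma> = - 1" using i by (auto simp: \<sigma>_def)
  have Psi_\<sigma>: "Psi al be i \<tau> x = (i + \<sigma> * (p * exp (al * \<tau>)), i + \<sigma> * (q * exp (be * \<tau>)))" for \<tau>
    using i by (auto simp: \<sigma>_def p_def q_def Psi_eq)
  have Psi2_\<sigma>: "Psi2 al be i (s, t) x =
      (1 - i - \<sigma> * ((1 - p * exp (al * t)) * exp (al * s)),
       1 - i - \<sigma> * ((1 - q * exp (be * t)) * exp (be * s)))"
    for s t using i by (auto simp: \<sigma>_def p_def q_def Psi2_eq Psi_eq algebra_simps)
  have "x \<in> {0<..<1} \<times> {0<..<1}" using interior_Gamma_subset x ..
  then have "0 < p" "0 < q"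
    using i by (auto simp: \<sigma>_def p_def q_def mem_Times_iff)
  moreover have "p * exp (al * \<tau>) < 1 \<and> q * exp (be * \<tau>) < 1" if "Psi al be i \<tau> x \<in> S" for \<tau>
  proof -
    have "Psi al be i \<tau> x \<in> {0<..<1} \<times> {0<..<1}" using S that interior_Gamma_subset by blast
    then show ?thesis using i unfolding Psi_\<sigma> by (auto simp: \<sigma>_def)
  qed
  moreover have "(q * exp (be * t) < p * exp (al * t) \<and> q * exp (be * t') < p * exp (al * t'))
      \<or> (p * exp (al * t) < q * exp (be * t) \<and> p * exp (al * t') < q * exp (be * t'))"
    using side Y \<sigma> unfolding Psi_\<sigma> by auto
  moreover have "(1 - p * exp (al * t)) * exp (al * s) = (1 - p * exp (al * t')) * exp (al * s')"
      "(1 - q * exp (be * t)) * exp (be * s) = (1 - q * exp (be * t')) * exp (be * s')"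
    using eq \<sigma> unfolding Psi2_\<sigma> by auto
  ultimately show "s = s' \<and> t = t'"
    using Y by (intro scaled_flows_eq_imp_eq[OF \<open>0 < be\<close> \<open>be < al\<close>]) auto
qed

lemma open_T2_Psi_preimage:
  assumes "open S"
  shows "open {st \<in> T2 al be i x. Psi al be i (snd st) x \<in> S}"
proof -
  have "{st \<in> T2 al be i x. Psi al be i (snd st) x \<in> S} =
      (\<lambda>st. (fst st, snd st, Psi2 al be i st x, Psi al be i (snd st) x)) -`
      ({0<..} \<times> {0<..} \<times> interior (Gamma al be) \<times> S)"
    by (auto simp: T2_def)
  moreover have "isCont (\<lambda>st. (fst st, snd st, Psi2 al be i st x, Psi al be i (snd st) x)) st"
    for st
    unfolding Psi2_eq Psi_eq by (intro continuous_intros)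
  ultimately show ?thesis
    using assms by (auto intro!: continuous_open_vimage open_Times)
qed

lemma Psi2_diffeo_onto:
  assumes "0 < be" and "be < al" and x: "x \<in> interior (Gamma al be)" and i: "i \<in> {0, 1}"
    and "open S" and S: "S \<subseteq> interior (Gamma al be)"
    and side: "S \<subseteq> {z. snd z < fst z} \<or> S \<subseteq> {z. fst z < snd z}"
  defines "A \<equiv> {st \<in> T2 al be i x. Psi al be i (snd st) x \<in> S}"
  shows "diffeo_onto (\<lambda>st. Psi2 al be i st x) A ((\<lambda>st. Psi2 al be i st x) ` A)"
proof -
  define Y1 where "Y1 st = i + (fst x - i) * exp (al * snd st)" for st :: "real \<times> real"
  define Y2 where "Y2 st = i + (snd x - i) * exp (be * snd st)" for st :: "real \<times> real"
  define a where "a st = al * (Y1 st - (1 - i)) * exp (al * fst st)" for st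
  define b where "b st = al * (Y1 st - i) * exp (al * fst st)" for st
  define c where "c st = be * (Y2 st - (1 - i)) * exp (be * fst st)" for st
  define d where "d st = be * (Y2 st - i) * exp (be * fst st)" for st
  have Y: "Psi al be i (snd st) x = (Y1 st, Y2 st)" for st
    by (simp add: Psi_eq Y1_def Y2_def)
  have F: "Psi2 al be i st x =
      (1 - i + (Y1 st - (1 - i)) * exp (al * fst st), 1 - i + (Y2 st - (1 - i)) * exp (be * fst st))"
    for st
    by (simp add: Psi2_eq Y)
  show ?thesis
  proof (rule diffeo_onto_if_Jacobian_nonzero)
    show "open A" unfolding A_def using \<open>open S\<close> by (rule open_T2_Psi_preimage)
    have "A \<subseteq> {st. Psi al be i (snd st) x \<in> S}" by (auto simp: A_def)
    then show "inj_on (\<lambda>st. Psi2 al be i st x) A"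
      using Psi2_inj_on[OF assms(1-4) S side] by (rule inj_on_subset[rotated])
    show "((\<lambda>st. Psi2 al be i st x) has_derivative
        (\<lambda>h. (fst h * a st + snd h * b st, fst h * c st + snd h * d st))) (at st)" for st
      unfolding F a_def b_def c_def d_def Y1_def Y2_def
      by (auto intro!: derivative_eq_intros simp: fun_eq_iff algebra_simps)
    show "Ck_real_on k A a" "Ck_real_on k A b" "Ck_real_on k A c" "Ck_real_on k A d" for k
      unfolding a_def b_def c_def d_def Y1_def Y2_def
      by (intro Ck_real_on_mult Ck_real_on_add Ck_real_on_diff Ck_real_on_exp Ck_real_on_const
          Ck_real_on_fst Ck_real_on_snd)+
    show "a st * d st - b st * c st \<noteq> 0" if "st \<in> A" for st
    proof -
      have "a st * d st - b st * c st =
          al * be * exp (al * fst st) * exp (be * fst st) * (1 - 2 * i) * (Y1 st - Y2 st)"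
        unfolding a_def b_def c_def d_def by (simp add: algebra_simps)
      moreover have "(Y1 st, Y2 st) \<in> S" using that by (simp add: A_def Y)
      then have "Y1 st \<noteq> Y2 st" using side by auto
      moreover have "1 - 2 * i \<noteq> 0" using i by auto
      ultimately show ?thesis using \<open>0 < be\<close> \<open>be < al\<close> by simp
    qed
  qed
qed

lemma open_Gamma_r: "open (Gamma_r al be)"
proof -
  have "Gamma_r al be = interior (Gamma al be) \<inter> {z. snd z < fst z}" by (auto simp: Gamma_r_def)
  then show ?thesis by (simp add: open_Int open_Collect_less continuous_on_fst continuous_on_snd)
qed

lemma open_Gamma_l: "open (Gamma_l al be)"
proof -
  have "Gamma_l al be = interior (Gamma al be) \<inter> {z. fst z < snd z}" by (auto simp: Gamma_l_def)
  then show ?thesis by (simp add: open_Int open_Collect_less continuous_on_fst continuous_on_snd)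
qed

theorem lemma6p1:
  fixes al be i :: real and x :: "real \<times> real"
  assumes "al > be" and "be > 0"
    and "x \<in> interior (Gamma al be)"
    and "i \<in> {0, 1}"
  shows "diffeo_onto (\<lambda>st. Psi2 al be i st x) (Rset al be i x)
           ((\<lambda>st. Psi2 al be i st x) ` Rset al be i x)
       \<and> diffeo_onto (\<lambda>st. Psi2 al be i st x) (Lset al be i x)
           ((\<lambda>st. Psi2 al be i st x) ` Lset al be i x)"
proof
  let ?F = "\<lambda>st. Psi2 al be i st x"
  show "diffeo_onto ?F (Rset al be i x) (?F ` Rset al be i x)"
    unfolding Rset_def using assms open_Gamma_r
    by (intro Psi2_diffeo_onto) (auto simp: Gamma_r_def)
  show "diffeo_onto ?F (Lset al be i x) (?F ` Lset al be i x)"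
    unfolding Lset_def using assms open_Gamma_l
    by (intro Psi2_diffeo_onto) (auto simp: Gamma_l_def)
qed

end
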